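(* There is an absolute constant $C$ such that for every $n$ and every $(\theta,m)$-LTF $f\colon\{0,1\}^n\to\{0,1\}$ with $\theta\ge2m>0$, $R^{lin}_{1/3}(f)\le C\frac{\theta}{m}\log\frac{\theta}{m}$ (in particular the bound does not depend on $n$).
   Context: $\mathrm{sgn}(y)=0$ for $y<0$ and $\mathrm{sgn}(y)=1$ for $y\ge0$. A $(\theta,m)$-LTF is a function $f(x)=\mathrm{sgn}(-\theta+\sum_{i=1}^n w_ix_i)$ on $\{0,1\}^n$ with real weights $w_i\ge0$ and real threshold $\theta$, whose margin $m>0$ satisfies $m\le\min_{x\in\{0,1\}^n}|-\theta+\sum_{i=1}^nw_ix_i|$. For $S\subseteq[n]$, $\chi_S(x)=\sum_{i\in S}x_i\pmod2$. Exact randomized $\mathbb F_2$-sketch complexity: for $f\colon\mathbb F_2^n\to\mathbb R$ and $\delta\in[0,1]$, $R^{lin}_\delta(f)$ is the smallest integer $k$ such that there exists a probability distribution over $k$-tuples of subsets $\mathbf S_1,\dots,\mathbf S_k\subseteq[n]$ and a function $g\colon\mathbb F_2^k\to\mathbb R$ with $\Pr_{\mathbf S_1,\dots,\mathbf S_k}[g(\chi_{\mathbf S_1}(x),\dots,\chi_{\mathbf S_k}(x))=f(x)]\ge1-\delta$ for every $x\in\mathbb F_2^n$. *)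

theory Defs
  imports "HOL-Probability.Probability"
begin

text \<open>Points of the cube {0,1}^n (= F_2^n) are functions nat => bool that vanish
  outside [n] = {0..<n}; true = 1, false = 0.\<close>
definition cube :: "nat \<Rightarrow> (nat \<Rightarrow> bool) set" where
  "cube n = {x. \<forall>i\<ge>n. \<not> x i}"

definition sgn01 :: "real \<Rightarrow> real" where
  "sgn01 y = (if y \<ge> 0 then 1 else 0)"

definition ltf_form :: "nat \<Rightarrow> (nat \<Rightarrow> real) \<Rightarrow> real \<Rightarrow> (nat \<Rightarrow> bool) \<Rightarrow> real" where
  "ltf_form n w \<theta> x = - \<theta> + (\<Sum>i<n. w i * (if x i then 1 else 0))"

definition is_LTF :: "nat \<Rightarrow> real \<Rightarrow> real \<Rightarrow> ((nat \<Rightarrow> bool) \<Rightarrow> real) \<Rightarrow> bool" where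
  "is_LTF n \<theta> m f \<longleftrightarrow>
     (\<exists>w. (\<forall>i<n. w i \<ge> 0) \<and> m > 0 \<and>
          (\<forall>x\<in>cube n. m \<le> \<bar>ltf_form n w \<theta> x\<bar>) \<and>
          (\<forall>x\<in>cube n. f x = sgn01 (ltf_form n w \<theta> x)))"

definition chi :: "nat set \<Rightarrow> (nat \<Rightarrow> bool) \<Rightarrow> bool" where
  "chi S x = odd (card {i\<in>S. x i})"

definition sketchable :: "nat \<Rightarrow> real \<Rightarrow> ((nat \<Rightarrow> bool) \<Rightarrow> real) \<Rightarrow> nat \<Rightarrow> bool" where
  "sketchable n \<delta> f k \<longleftrightarrow>
     (\<exists>(D :: nat set list pmf) (g :: bool list \<Rightarrow> real).
        (\<forall>Ss\<in>set_pmf D. length Ss = k \<and> (\<forall>S\<in>set Ss. S \<subseteq> {..<n})) \<and>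
        (\<forall>x\<in>cube n. measure_pmf.prob D {Ss. g (map (\<lambda>S. chi S x) Ss) = f x} \<ge> 1 - \<delta>))"

definition R_lin :: "nat \<Rightarrow> real \<Rightarrow> ((nat \<Rightarrow> bool) \<Rightarrow> real) \<Rightarrow> nat" where
  "R_lin n \<delta> f = (LEAST k. sketchable n \<delta> f k)"

end

theory Submission
  imports Defs
begin

text \<open>Coordinates of weight below \<open>2m\<close> are irrelevant: clearing one of them moves the linear
  form by less than \<open>2m\<close>, so it cannot cross the margin around \<open>\<theta>\<close>. With \<open>K = \<lceil>\<theta>/2m\<rceil>\<close>, an
  input with \<open>f x = 0\<close> has fewer than \<open>K\<close> relevant ones, while \<open>f x = 1\<close> forces their weight to
  be at least \<open>\<theta> + m\<close>. The sketch hashes the relevant coordinates into buckets labelled by the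
  weight rounded down to a multiple of \<open>m/2K\<close> and a hash value in \<open>[6K\<^sup>2]\<close>, and stores the XOR of
  the code words of the odd buckets, for a greedy code in which no \<open>3K\<close> code words sum to zero
  (\<open>O(K log K)\<close> bits). The decoder accepts if no set of at most \<open>K\<close> buckets of rounded weight
  below \<open>\<theta>\<close> has the same XOR. This never accepts a negative input; a positive input with fewer
  than \<open>2K\<close> relevant ones is accepted whenever their hashes are distinct (probability
  \<open>\<ge> 2/3\<close>), since the buckets are then recovered exactly. A positive input with at least \<open>2K\<close>
  relevant ones is recognised from \<open>12K\<close> bins with \<open>log K + O(1)\<close> random parities each: with
  probability \<open>\<ge> 2/3\<close> at least \<open>K\<close> bins are hit and each shows an odd parity.\<close>

section \<open>XOR sums and codes\<close>

text \<open>Subsets of \<open>nat\<close> encode vectors over \<open>\<bbbF>\<^sub>2\<close>, and \<open>xor_sum col J\<close> is the sum of the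
  vectors \<open>col b\<close> for \<open>b \<in> J\<close>.\<close>
definition xor_sum :: "(nat \<Rightarrow> nat set) \<Rightarrow> nat set \<Rightarrow> nat set" where
  "xor_sum col J = {l. odd (card {b\<in>J. l \<in> col b})}"

lemma odd_card_symdiff:
  assumes "finite X" "finite Y"
  shows "odd (card (sym_diff X Y)) \<longleftrightarrow> odd (card X) \<noteq> odd (card Y)"
proof -
  have "sym_diff X Y = (X \<union> Y) - (X \<inter> Y)" by blast
  moreover have "card ((X \<union> Y) - (X \<inter> Y)) = card (X \<union> Y) - card (X \<inter> Y)"
    using assms by (intro card_Diff_subset) auto
  moreover have "card X + card Y = card (X \<union> Y) + card (X \<inter> Y)"
    using assms card_Un_Int by blast
  moreover have "card (X \<inter> Y) \<le> card (X \<union> Y)" using assms by (intro card_mono) auto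
  ultimately show ?thesis by presburger
qed

lemma xor_sum_symdiff:
  assumes "finite A" "finite B"
  shows "xor_sum col (sym_diff A B) = sym_diff (xor_sum col A) (xor_sum col B)"
proof -
  have "{b\<in>sym_diff A B. l \<in> col b} = sym_diff {b\<in>A. l \<in> col b} {b\<in>B. l \<in> col b}" for l
    by blast
  then show ?thesis unfolding xor_sum_def using assms by (auto simp: odd_card_symdiff)
qed

lemma xor_sum_cong: "(\<And>b. b \<in> J \<Longrightarrow> col b = col' b) \<Longrightarrow> xor_sum col J = xor_sum col' J"
  unfolding xor_sum_def by (metis (mono_tags, lifting) Collect_cong)

lemma xor_sum_insert:
  assumes "finite J" "b \<notin> J"
  shows "xor_sum col (insert b J) = sym_diff (xor_sum col J) (col b)"
proof -
  have "{b' \<in> {b}. l \<in> col b'} = (if l \<in> col b then {b} else {})" for l by auto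
  then have "xor_sum col {b} = col b" unfolding xor_sum_def by auto
  moreover have "insert b J = sym_diff J {b}" using assms by blast
  ultimately show ?thesis using xor_sum_symdiff[of J "{b}" col] assms by simp
qed

lemma xor_sum_subset: "(\<And>b. col b \<subseteq> A) \<Longrightarrow> xor_sum col J \<subseteq> A"
  unfolding xor_sum_def by (force dest!: odd_pos simp: card_gt_0_iff)

text \<open>Any at most \<open>D\<close> of the first \<open>N\<close> vectors are linearly independent, i.e. they are the columns
  of a parity check matrix of a code of minimum distance \<open>> D\<close>.\<close>
definition xor_independent :: "nat \<Rightarrow> nat \<Rightarrow> (nat \<Rightarrow> nat set) \<Rightarrow> bool" where
  "xor_independent N D col \<longleftrightarrow> (\<forall>J. J \<subseteq> {..<N} \<and> J \<noteq> {} \<and> card J \<le> D \<longrightarrow> xor_sum col J \<noteq> {})"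

lemma sum_powers_le_Suc_power: "(\<Sum>k\<le>d. (N::nat) ^ k) \<le> (N + 1) ^ d"
proof (induction d)
  case (Suc d)
  have "(\<Sum>k\<le>Suc d. N ^ k) = 1 + N * (\<Sum>k\<le>d. N ^ k)"
    unfolding sum.atMost_Suc_shift by (simp add: sum_distrib_left)
  also have "\<dots> \<le> (N + 1) ^ d + N * (N + 1) ^ d"
    using Suc member_le_sum[of 0 "{..d}" "\<lambda>k. N ^ k"] by (intro add_mono mult_le_mono2) auto
  finally show ?case by (simp add: algebra_simps)
qed simp

lemma card_small_subsets_le: "card {J. J \<subseteq> {..<(N::nat)} \<and> card J \<le> d} \<le> (N + 1) ^ d"
proof -
  have "{J. J \<subseteq> {..<N} \<and> card J \<le> d} = (\<Union>k\<le>d. {J. J \<subseteq> {..<N} \<and> card J = k})" by auto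
  then have "card {J. J \<subseteq> {..<N} \<and> card J \<le> d} \<le> (\<Sum>k\<le>d. card {J. J \<subseteq> {..<N} \<and> card J = k})"
    using card_UN_le[of "{..d}"] by simp
  also have "\<dots> = (\<Sum>k\<le>d. N choose k)" by (simp add: n_subsets)
  also have "\<dots> \<le> (\<Sum>k\<le>d. N ^ k)"
    by (intro sum_mono) (metis binomial_eq_0 binomial_le_pow not_le zero_le)
  also have "\<dots> \<le> (N + 1) ^ d" by (rule sum_powers_le_Suc_power)
  finally show ?thesis .
qed

text \<open>Greedy (Gilbert--Varshamov) extension: the new vector avoids the fewer than \<open>2^r\<close> sums of at
  most \<open>D - 1\<close> old ones.\<close>
lemma xor_independent_extend:
  assumes indep: "xor_independent N D col" and "1 \<le> D" and small: "(N + 1) ^ (D - 1) < 2 ^ r"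
  obtains v where "v \<subseteq> {..<r}" "xor_independent (Suc N) D (col(N := v))"
proof -
  define Bad where "Bad = xor_sum col ` {J. J \<subseteq> {..<N} \<and> card J \<le> D - 1}"
  have fin: "finite {J. J \<subseteq> {..<N} \<and> card J \<le> D - 1}"
    by (rule finite_subset[of _ "Pow {..<N}"]) auto
  have "card Bad \<le> (N + 1) ^ (D - 1)"
    unfolding Bad_def using card_image_le[OF fin] card_small_subsets_le le_trans by blast
  then have "card Bad < card (Pow {..<r})" using small by (simp add: card_Pow)
  then have "\<not> Pow {..<r} \<subseteq> Bad"
    using card_mono[of Bad] fin unfolding Bad_def by (meson finite_imageI not_le)
  then obtain v where v: "v \<subseteq> {..<r}" "v \<notin> Bad" by blast
  have "xor_sum (col(N := v)) J \<noteq> {}"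
    if J: "J \<subseteq> {..<Suc N}" "J \<noteq> {}" "card J \<le> D" for J
  proof (cases "N \<in> J")
    case False
    then have "xor_sum (col(N := v)) J = xor_sum col J" by (intro xor_sum_cong) auto
    moreover have "J \<subseteq> {..<N}" using J(1) False less_Suc_eq by auto
    ultimately show ?thesis using indep J unfolding xor_independent_def by auto
  next
    case True
    define J0 where "J0 = J - {N}"
    have J0: "J0 \<subseteq> {..<N}" "finite J0" "N \<notin> J0" "J = insert N J0"
      using J True finite_subset[of J "{..<Suc N}"] by (auto simp: J0_def)
    then have "card J0 \<le> D - 1" using J(3) by simp
    then have "xor_sum col J0 \<noteq> v" using v J0 unfolding Bad_def by blast
    moreover have "xor_sum (col(N := v)) J0 = xor_sum col J0" by (rule xor_sum_cong) (use J0 in auto)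
    ultimately show ?thesis using J0 by (auto simp: xor_sum_insert)
  qed
  with v that show ?thesis unfolding xor_independent_def by blast
qed

lemma exists_xor_independent:
  assumes "1 \<le> D" "(N + 1) ^ D < 2 ^ r"
  shows "\<exists>col. (\<forall>b. col b \<subseteq> {..<r}) \<and> xor_independent N D col"
  using assms(2)
proof (induction N)
  case 0
  show ?case by (intro exI[of _ "\<lambda>_. {}"]) (auto simp: xor_independent_def)
next
  case (Suc N)
  have "(N + 1) ^ D \<le> (Suc N + 1) ^ D" "(N + 1) ^ (D - 1) \<le> (Suc N + 1) ^ D"
    using assms(1) by (auto intro!: power_mono order.trans[OF _ power_increasing[of "D - 1" D]])
  with Suc obtain col where "\<forall>b. col b \<subseteq> {..<r}" "xor_independent N D col"
    "(N + 1) ^ (D - 1) < 2 ^ r" by fastforce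
  with xor_independent_extend[OF _ assms(1)] show ?case
    by (metis fun_upd_apply)
qed

lemma odd_card_regroup:
  assumes "finite P"
  shows "odd (card {i\<in>P. R (\<beta> i)}) \<longleftrightarrow> odd (card {b. R b \<and> odd (card {i\<in>P. \<beta> i = b})})"
proof -
  let ?B = "{b\<in>\<beta> ` P. R b}"
  have "card {i\<in>P. R (\<beta> i)} = card (\<Union>b\<in>?B. {i\<in>P. \<beta> i = b})"
    by (intro arg_cong[where f = card]) auto
  also have "\<dots> = (\<Sum>b\<in>?B. card {i\<in>P. \<beta> i = b})"
    using assms by (intro card_UN_disjoint) auto
  finally have "even (card {i\<in>P. R (\<beta> i)}) \<longleftrightarrow> even (card {b\<in>?B. odd (card {i\<in>P. \<beta> i = b})})"
    using assms by (simp add: even_sum_iff)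
  moreover have "b \<in> \<beta> ` P" if "odd (card {i\<in>P. \<beta> i = b})" for b
    using odd_pos[OF that] by (auto simp: card_gt_0_iff)
  then have "{b\<in>?B. odd (card {i\<in>P. \<beta> i = b})} = {b. R b \<and> odd (card {i\<in>P. \<beta> i = b})}"
    by blast
  ultimately show ?thesis by simp
qed

section \<open>Counting in finite product spaces\<close>

lemma card_PiE_filter_coord:
  assumes "finite I" "j \<in> I" "\<And>i. finite (F i)"
  shows "card {\<omega>\<in>PiE I F. P (\<omega> j) (restrict \<omega> (I - {j}))} =
         (\<Sum>g\<in>PiE (I - {j}) F. card {y\<in>F j. P y g})"
proof -
  let ?S = "Sigma (PiE (I - {j}) F) (\<lambda>g. {y\<in>F j. P y g})"
  have restrict_upd: "restrict (g(j := y)) (I - {j}) = g" if "g \<in> PiE (I - {j}) F" for g y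
    using that by (auto simp: restrict_def PiE_def extensional_def fun_eq_iff)
  have "bij_betw (\<lambda>(g, y). g(j := y)) ?S {\<omega>\<in>PiE I F. P (\<omega> j) (restrict \<omega> (I - {j}))}"
  proof (rule bij_betw_byWitness[where f' = "\<lambda>\<omega>. (restrict \<omega> (I - {j}), \<omega> j)"])
    show "\<forall>a\<in>?S. (\<lambda>\<omega>. (restrict \<omega> (I - {j}), \<omega> j)) ((\<lambda>(g, y). g(j := y)) a) = a"
      using restrict_upd by auto
    show "\<forall>\<omega>\<in>{\<omega>\<in>PiE I F. P (\<omega> j) (restrict \<omega> (I - {j}))}.
            (\<lambda>(g, y). g(j := y)) ((\<lambda>\<omega>. (restrict \<omega> (I - {j}), \<omega> j)) \<omega>) = \<omega>"
      using assms(2) by (auto simp: restrict_def PiE_def extensional_def fun_eq_iff)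
    show "(\<lambda>(g, y). g(j := y)) ` ?S \<subseteq> {\<omega>\<in>PiE I F. P (\<omega> j) (restrict \<omega> (I - {j}))}"
      using assms(2) restrict_upd by (fastforce simp: PiE_def extensional_def Pi_def)
    show "(\<lambda>\<omega>. (restrict \<omega> (I - {j}), \<omega> j)) ` {\<omega>\<in>PiE I F. P (\<omega> j) (restrict \<omega> (I - {j}))} \<subseteq> ?S"
      using assms(2) by (auto simp: PiE_def extensional_def Pi_def)
  qed
  then have "card {\<omega>\<in>PiE I F. P (\<omega> j) (restrict \<omega> (I - {j}))} = card ?S"
    by (simp add: bij_betw_same_card)
  also have "\<dots> = (\<Sum>g\<in>PiE (I - {j}) F. card {y\<in>F j. P y g})"
    by (rule card_SigmaI) (use assms in \<open>auto simp: finite_PiE\<close>)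
  finally show ?thesis .
qed

lemma card_PiE_filter_coord_le:
  assumes "finite I" "j \<in> I" "\<And>i. finite (F i)"
    and "\<And>g. g \<in> PiE (I - {j}) F \<Longrightarrow> card {y\<in>F j. P y g} * K \<le> card (F j)"
  shows "card {\<omega>\<in>PiE I F. P (\<omega> j) (restrict \<omega> (I - {j}))} * K \<le> card (PiE I F)"
proof -
  have "card {\<omega>\<in>PiE I F. P (\<omega> j) (restrict \<omega> (I - {j}))} * K =
        (\<Sum>g\<in>PiE (I - {j}) F. card {y\<in>F j. P y g} * K)"
    using card_PiE_filter_coord[of I j F P, OF assms(1-3)] by (simp add: sum_distrib_right)
  also have "\<dots> \<le> (\<Sum>g\<in>PiE (I - {j}) F. card (F j))" by (rule sum_mono) (rule assms(4))
  also have "\<dots> = card (PiE I F)"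
    using card_PiE_filter_coord[of I j F "\<lambda>_ _. True", OF assms(1-3)] by simp
  finally show ?thesis .
qed

lemma card_PiE_coord_collision:
  assumes "finite I" "i \<in> I" "j \<in> I" "i \<noteq> j" "finite F"
    and fibres: "\<And>a. card {y\<in>F. \<pi> y = a} * K \<le> card F"
  shows "card {\<omega>\<in>PiE I (\<lambda>_. F). \<pi> (\<omega> i) = \<pi> (\<omega> j)} * K \<le> card (PiE I (\<lambda>_. F))"
proof -
  have "{\<omega>\<in>PiE I (\<lambda>_. F). \<pi> (\<omega> i) = \<pi> (\<omega> j)} =
     {\<omega>\<in>PiE I (\<lambda>_. F). (\<lambda>y g. \<pi> y = \<pi> (g i)) (\<omega> j) (restrict \<omega> (I - {j}))}"
    using assms(2,4) by auto
  also have "card \<dots> * K \<le> card (PiE I (\<lambda>_. F))"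
    by (rule card_PiE_filter_coord_le[where P = "\<lambda>y g. \<pi> y = \<pi> (g i)"])
       (use assms(1-5) fibres in auto)
  finally show ?thesis .
qed

definition ordered_pairs :: "nat set \<Rightarrow> (nat \<times> nat) set" where
  "ordered_pairs T = {(i, k). i \<in> T \<and> k \<in> T \<and> i < k}"

definition collisions :: "(nat \<Rightarrow> 'b) \<Rightarrow> nat set \<Rightarrow> (nat \<times> nat) set" where
  "collisions f T = {p\<in>ordered_pairs T. f (fst p) = f (snd p)}"

lemma finite_ordered_pairs: "finite T \<Longrightarrow> finite (ordered_pairs T)"
  unfolding ordered_pairs_def by (rule finite_subset[of _ "T \<times> T"]) auto

lemma card_ordered_pairs_le:
  assumes "finite T"
  shows "2 * card (ordered_pairs T) \<le> card T * card T"
proof -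
  let ?swap = "\<lambda>(i, k). (k, i)"
  have "card (?swap ` ordered_pairs T) = card (ordered_pairs T)"
    by (rule card_image) (auto simp: inj_on_def)
  moreover have "ordered_pairs T \<inter> ?swap ` ordered_pairs T = {}"
    "ordered_pairs T \<union> ?swap ` ordered_pairs T \<subseteq> T \<times> T"
    unfolding ordered_pairs_def by auto
  ultimately have "2 * card (ordered_pairs T) = card (ordered_pairs T \<union> ?swap ` ordered_pairs T)"
    using finite_ordered_pairs[OF assms] by (simp add: card_Un_disjoint)
  also have "\<dots> \<le> card (T \<times> T)" using \<open>_ \<subseteq> T \<times> T\<close> assms by (intro card_mono) auto
  finally show ?thesis by (simp add: card_cartesian_product)
qed

lemma inj_on_iff_collisions_empty: "inj_on f T \<longleftrightarrow> collisions f T = {}"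
  unfolding inj_on_def collisions_def ordered_pairs_def by (auto, metis linorder_neqE_nat)

lemma card_le_card_image_add_collisions:
  assumes "finite T"
  shows "card T \<le> card (f ` T) + card (collisions f T)"
proof -
  define rep where "rep v = Min {i\<in>T. f i = v}" for v
  have rep: "rep (f i) \<in> T" "f (rep (f i)) = f i" "rep (f i) \<le> i" if "i \<in> T" for i
  proof -
    have ne: "{i'\<in>T. f i' = f i} \<noteq> {}" "finite {i'\<in>T. f i' = f i}" using that assms by auto
    from Min_in[OF ne(2,1)] show "rep (f i) \<in> T" "f (rep (f i)) = f i" unfolding rep_def by auto
    show "rep (f i) \<le> i" unfolding rep_def using ne that by (intro Min_le) auto
  qed
  define Rs where "Rs = rep ` f ` T"
  have "(rep (f i), i) \<in> collisions f T" if "i \<in> T - Rs" for i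
  proof -
    have "rep (f i) \<noteq> i" using that unfolding Rs_def by (metis DiffE imageI)
    with rep[of i] that show ?thesis by (auto simp: collisions_def ordered_pairs_def)
  qed
  then have "card (T - Rs) \<le> card (collisions f T)"
    by (intro card_inj_on_le[where f = "\<lambda>i. (rep (f i), i)"] inj_onI image_subsetI)
       (auto intro: finite_subset[OF _ finite_ordered_pairs[OF assms]] simp: collisions_def)
  moreover have "card Rs \<le> card (f ` T)" unfolding Rs_def by (rule card_image_le) (simp add: assms)
  moreover have "Rs \<subseteq> T" unfolding Rs_def using rep by auto
  then have "card T = card Rs + card (T - Rs)"
    using assms by (metis card_Diff_subset finite_subset le_add_diff_inverse card_mono)
  ultimately show ?thesis by linarith
qed

lemma card_filter_card_ge_le:
  assumes "finite \<Omega>" "finite Ps"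
  shows "card {\<omega>\<in>\<Omega>. a \<le> card {p\<in>Ps. C p \<omega>}} * a \<le> (\<Sum>p\<in>Ps. card {\<omega>\<in>\<Omega>. C p \<omega>})"
proof -
  have "card {\<omega>\<in>\<Omega>. a \<le> card {p\<in>Ps. C p \<omega>}} * a = (\<Sum>\<omega>\<in>{\<omega>\<in>\<Omega>. a \<le> card {p\<in>Ps. C p \<omega>}}. a)"
    by simp
  also have "\<dots> \<le> (\<Sum>\<omega>\<in>{\<omega>\<in>\<Omega>. a \<le> card {p\<in>Ps. C p \<omega>}}. card {p\<in>Ps. C p \<omega>})"
    by (rule sum_mono) simp
  also have "\<dots> \<le> (\<Sum>\<omega>\<in>\<Omega>. card {p\<in>Ps. C p \<omega>})" by (rule sum_mono2) (use assms in auto)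
  also have "\<dots> = (\<Sum>\<omega>\<in>\<Omega>. \<Sum>p\<in>Ps. if C p \<omega> then 1 else 0)"
    using assms by (intro sum.cong refl) (simp add: sum.inter_filter[symmetric])
  also have "\<dots> = (\<Sum>p\<in>Ps. \<Sum>\<omega>\<in>\<Omega>. if C p \<omega> then 1 else 0)" by (rule sum.swap)
  also have "\<dots> = (\<Sum>p\<in>Ps. card {\<omega>\<in>\<Omega>. C p \<omega>})"
    using assms by (intro sum.cong refl) (simp add: sum.inter_filter[symmetric])
  finally show ?thesis .
qed

lemma card_filter_Bex_le_sum:
  assumes "finite \<Omega>" "finite Ps"
  shows "card {\<omega>\<in>\<Omega>. \<exists>p\<in>Ps. C p \<omega>} \<le> (\<Sum>p\<in>Ps. card {\<omega>\<in>\<Omega>. C p \<omega>})"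
proof -
  have "{\<omega>\<in>\<Omega>. \<exists>p\<in>Ps. C p \<omega>} = (\<Union>p\<in>Ps. {\<omega>\<in>\<Omega>. C p \<omega>})" by auto
  then show ?thesis using card_UN_le[OF assms(2), of "\<lambda>p. {\<omega>\<in>\<Omega>. C p \<omega>}"] by simp
qed

lemma sum_card_PiE_collisions:
  assumes "finite I" "T \<subseteq> I" "finite F" "\<And>a. card {y\<in>F. \<pi> y = a} * K \<le> card F"
  shows "(\<Sum>p\<in>ordered_pairs T. card {\<omega>\<in>PiE I (\<lambda>_. F). p \<in> collisions (\<lambda>i. \<pi> (\<omega> i)) T}) * K
           \<le> card (ordered_pairs T) * card (PiE I (\<lambda>_. F))"
proof -
  have "card {\<omega>\<in>PiE I (\<lambda>_. F). p \<in> collisions (\<lambda>i. \<pi> (\<omega> i)) T} * K \<le> card (PiE I (\<lambda>_. F))"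
    if "p \<in> ordered_pairs T" for p
  proof -
    have "{\<omega>\<in>PiE I (\<lambda>_. F). p \<in> collisions (\<lambda>i. \<pi> (\<omega> i)) T} =
          {\<omega>\<in>PiE I (\<lambda>_. F). \<pi> (\<omega> (fst p)) = \<pi> (\<omega> (snd p))}"
      using that unfolding collisions_def by blast
    moreover have "fst p \<in> I" "snd p \<in> I" "fst p \<noteq> snd p"
      using that assms(2) by (auto simp: ordered_pairs_def)
    ultimately show ?thesis using card_PiE_coord_collision[OF assms(1) _ _ _ assms(3,4)] by simp
  qed
  then have "(\<Sum>p\<in>ordered_pairs T. card {\<omega>\<in>PiE I (\<lambda>_. F). p \<in> collisions (\<lambda>i. \<pi> (\<omega> i)) T} * K)
           \<le> (\<Sum>p\<in>ordered_pairs T. card (PiE I (\<lambda>_. F)))"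
    by (rule sum_mono)
  then show ?thesis by (simp add: sum_distrib_right)
qed

lemma card_PiE_some_collision:
  assumes "finite I" "T \<subseteq> I" "finite F" "\<And>a. card {y\<in>F. \<pi> y = a} * K \<le> card F"
  shows "card {\<omega>\<in>PiE I (\<lambda>_. F). \<not> inj_on (\<lambda>i. \<pi> (\<omega> i)) T} * K
           \<le> card (ordered_pairs T) * card (PiE I (\<lambda>_. F))"
proof -
  have T: "finite T" using assms(1,2) finite_subset by blast
  have "{\<omega>\<in>PiE I (\<lambda>_. F). \<not> inj_on (\<lambda>i. \<pi> (\<omega> i)) T} =
        {\<omega>\<in>PiE I (\<lambda>_. F). \<exists>p\<in>ordered_pairs T. p \<in> collisions (\<lambda>i. \<pi> (\<omega> i)) T}"
    unfolding inj_on_iff_collisions_empty collisions_def by blast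
  then have "card {\<omega>\<in>PiE I (\<lambda>_. F). \<not> inj_on (\<lambda>i. \<pi> (\<omega> i)) T} \<le>
        (\<Sum>p\<in>ordered_pairs T. card {\<omega>\<in>PiE I (\<lambda>_. F). p \<in> collisions (\<lambda>i. \<pi> (\<omega> i)) T})"
    using card_filter_Bex_le_sum[OF finite_PiE finite_ordered_pairs[OF T]] assms(1,3) by simp
  then have "card {\<omega>\<in>PiE I (\<lambda>_. F). \<not> inj_on (\<lambda>i. \<pi> (\<omega> i)) T} * K \<le>
        (\<Sum>p\<in>ordered_pairs T. card {\<omega>\<in>PiE I (\<lambda>_. F). p \<in> collisions (\<lambda>i. \<pi> (\<omega> i)) T}) * K"
    by (rule mult_le_mono1)
  also have "\<dots> \<le> card (ordered_pairs T) * card (PiE I (\<lambda>_. F))"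
    by (rule sum_card_PiE_collisions[OF assms])
  finally show ?thesis .
qed

lemma card_PiE_many_collisions:
  assumes "finite I" "T \<subseteq> I" "finite F" "\<And>a. card {y\<in>F. \<pi> y = a} * K \<le> card F"
  shows "card {\<omega>\<in>PiE I (\<lambda>_. F). a \<le> card (collisions (\<lambda>i. \<pi> (\<omega> i)) T)} * a * K
           \<le> card (ordered_pairs T) * card (PiE I (\<lambda>_. F))"
proof -
  have T: "finite T" using assms(1,2) finite_subset by blast
  have "card (collisions f T) = card {p\<in>ordered_pairs T. p \<in> collisions f T}" for f :: "nat \<Rightarrow> 'b"
    by (simp add: collisions_def)
  then have "card {\<omega>\<in>PiE I (\<lambda>_. F). a \<le> card (collisions (\<lambda>i. \<pi> (\<omega> i)) T)} * a \<le>
        (\<Sum>p\<in>ordered_pairs T. card {\<omega>\<in>PiE I (\<lambda>_. F). p \<in> collisions (\<lambda>i. \<pi> (\<omega> i)) T})"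
    using card_filter_card_ge_le[OF finite_PiE finite_ordered_pairs[OF T]] assms(1,3) by simp
  then have "card {\<omega>\<in>PiE I (\<lambda>_. F). a \<le> card (collisions (\<lambda>i. \<pi> (\<omega> i)) T)} * a * K \<le>
        (\<Sum>p\<in>ordered_pairs T. card {\<omega>\<in>PiE I (\<lambda>_. F). p \<in> collisions (\<lambda>i. \<pi> (\<omega> i)) T}) * K"
    by (rule mult_le_mono1)
  also have "\<dots> \<le> card (ordered_pairs T) * card (PiE I (\<lambda>_. F))"
    by (rule sum_card_PiE_collisions[OF assms])
  finally show ?thesis .
qed

lemma le_of_mult_le_scaled:
  fixes a b k M Z :: nat
  assumes "a * M \<le> b * Z" "k * b \<le> M" "0 < M"
  shows "k * a \<le> Z"
proof -
  have "(k * a) * M \<le> (k * b) * Z" using assms(1) by (simp add: mult.assoc)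
  also have "\<dots> \<le> M * Z" using assms(2) by (rule mult_le_mono1)
  finally show ?thesis using assms(3) by (simp add: mult.commute)
qed

section \<open>Random seeds\<close>

definition seeds :: "nat \<Rightarrow> nat \<Rightarrow> nat \<Rightarrow> (nat \<times> nat \<times> nat set) set" where
  "seeds M B c = {..<M} \<times> {..<B} \<times> Pow {..<c}"

abbreviation hash :: "nat \<times> nat \<times> nat set \<Rightarrow> nat" where "hash s \<equiv> fst s"
abbreviation bin :: "nat \<times> nat \<times> nat set \<Rightarrow> nat" where "bin s \<equiv> fst (snd s)"
abbreviation parities :: "nat \<times> nat \<times> nat set \<Rightarrow> nat set" where "parities s \<equiv> snd (snd s)"

type_synonym seed_map = "nat \<Rightarrow> nat \<times> nat \<times> nat set"

lemma finite_seeds [simp]: "finite (seeds M B c)"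
  by (simp add: seeds_def)

lemma card_seeds: "card (seeds M B c) = M * B * 2 ^ c"
  by (simp add: seeds_def card_cartesian_product card_Pow)

lemma card_seeds_hash_fibre: "card {s\<in>seeds M B c. hash s = a} * M \<le> card (seeds M B c)"
proof -
  have "card {s\<in>seeds M B c. hash s = a} \<le> card ({a} \<times> {..<B} \<times> Pow {..<c})"
    by (intro card_mono) (auto simp: seeds_def)
  then show ?thesis by (simp add: card_seeds card_cartesian_product card_Pow)
qed

lemma card_seeds_bin_fibre: "card {s\<in>seeds M B c. bin s = a} * B \<le> card (seeds M B c)"
proof -
  have "card {s\<in>seeds M B c. bin s = a} \<le> card ({..<M} \<times> {a} \<times> Pow {..<c})"
    by (intro card_mono) (auto simp: seeds_def)
  then show ?thesis by (simp add: card_seeds card_cartesian_product card_Pow)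
qed

text \<open>An action of \<open>(Pow {..<c}, sym_diff)\<close> that translates \<open>pat\<close> makes all level sets of \<open>pat\<close>
  equally large.\<close>
lemma card_level_empty_mult_pow:
  fixes pat :: "'a \<Rightarrow> nat set"
  assumes "finite A"
    and pat: "\<And>\<omega>. \<omega> \<in> A \<Longrightarrow> pat \<omega> \<subseteq> {..<c}"
    and closed: "\<And>U \<omega>. U \<subseteq> {..<c} \<Longrightarrow> \<omega> \<in> A \<Longrightarrow> act U \<omega> \<in> A"
    and invol: "\<And>U \<omega>. U \<subseteq> {..<c} \<Longrightarrow> \<omega> \<in> A \<Longrightarrow> act U (act U \<omega>) = \<omega>"
    and shift: "\<And>U \<omega>. U \<subseteq> {..<c} \<Longrightarrow> \<omega> \<in> A \<Longrightarrow> pat (act U \<omega>) = sym_diff (pat \<omega>) U"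
  shows "card {\<omega>\<in>A. pat \<omega> = {}} * 2 ^ c = card A"
proof -
  define level where "level V = {\<omega>\<in>A. pat \<omega> = V}" for V
  have le: "card (level V) \<le> card (level (sym_diff V U))" if U: "U \<subseteq> {..<c}" for U V
  proof (rule card_inj_on_le[where f = "act U"])
    show "inj_on (act U) (level V)"
    proof (rule inj_onI)
      fix x y assume "x \<in> level V" "y \<in> level V" "act U x = act U y"
      then show "x = y" using invol[OF U] unfolding level_def by (metis mem_Collect_eq)
    qed
    show "act U ` level V \<subseteq> level (sym_diff V U)"
      using closed[OF U] shift[OF U] unfolding level_def by (intro image_subsetI) simp
    show "finite (level (sym_diff V U))" using assms(1) unfolding level_def by simp
  qed
  have same: "card (level V) = card (level {})" if "V \<subseteq> {..<c}" for V
    using le[OF that, of "{}"] le[OF that, of V] by simp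
  have "A = (\<Union>V\<in>Pow {..<c}. level V)" using pat unfolding level_def by auto
  then have "card A = (\<Sum>V\<in>Pow {..<c}. card (level V))"
    by (simp only:) (rule card_UN_disjoint, auto simp: level_def intro: finite_subset[OF _ assms(1)])
  also have "\<dots> = (\<Sum>V\<in>Pow {..<c}. card (level {}))" by (intro sum.cong refl same) simp
  also have "\<dots> = card (level {}) * 2 ^ c" by (simp add: card_Pow)
  finally show ?thesis by (simp add: level_def)
qed

lemma odd_card_filter_toggle:
  assumes "finite P" "i0 \<in> P" "\<And>i. i \<in> P \<Longrightarrow> i \<noteq> i0 \<Longrightarrow> Q' i = Q i" "Q' i0 = (\<not> Q i0)"
  shows "odd (card {i\<in>P. Q' i}) \<longleftrightarrow> \<not> odd (card {i\<in>P. Q i})"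
proof -
  define A where "A = {i\<in>P - {i0}. Q i}"
  have "finite A" "i0 \<notin> A" using assms(1) by (auto simp: A_def)
  moreover have "{i\<in>P. Q i} = (if Q i0 then insert i0 A else A)"
    "{i\<in>P. Q' i} = (if Q i0 then A else insert i0 A)" using assms by (auto simp: A_def)
  ultimately show ?thesis by auto
qed

definition lead_in_bin :: "nat set \<Rightarrow> nat \<Rightarrow> seed_map \<Rightarrow> nat" where
  "lead_in_bin P j \<omega> = Min {i\<in>P. bin (\<omega> i) = j}"

definition toggle_lead :: "nat set \<Rightarrow> nat \<Rightarrow> nat set \<Rightarrow> seed_map \<Rightarrow> seed_map" where
  "toggle_lead P j U \<omega> = fun_upd \<omega> (lead_in_bin P j \<omega>)
     (hash (\<omega> (lead_in_bin P j \<omega>)), bin (\<omega> (lead_in_bin P j \<omega>)),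
      sym_diff (parities (\<omega> (lead_in_bin P j \<omega>))) U)"

definition bin_pattern :: "nat set \<Rightarrow> nat \<Rightarrow> nat \<Rightarrow> seed_map \<Rightarrow> nat set" where
  "bin_pattern P j c \<omega> = {a\<in>{..<c}. odd (card {i\<in>P. bin (\<omega> i) = j \<and> a \<in> parities (\<omega> i)})}"

lemma lead_in_bin:
  assumes "finite P" "\<exists>i\<in>P. bin (\<omega> i) = j"
  shows "lead_in_bin P j \<omega> \<in> P" "bin (\<omega> (lead_in_bin P j \<omega>)) = j"
  using assms Min_in[of "{i\<in>P. bin (\<omega> i) = j}"] unfolding lead_in_bin_def by auto

lemma bin_toggle_lead [simp]: "bin (toggle_lead P j U \<omega> i) = bin (\<omega> i)"
  by (simp add: toggle_lead_def)

lemma lead_in_bin_toggle_lead [simp]: "lead_in_bin P j (toggle_lead P j U \<omega>) = lead_in_bin P j \<omega>"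
  by (simp add: lead_in_bin_def)

lemma toggle_lead_toggle_lead: "toggle_lead P j U (toggle_lead P j U \<omega>) = \<omega>"
proof -
  have "sym_diff (sym_diff X U) U = X" for X :: "nat set" by blast
  then show ?thesis
    by (simp add: toggle_lead_def lead_in_bin_toggle_lead[unfolded toggle_lead_def] fun_eq_iff)
qed

lemma toggle_lead_in_PiE:
  assumes "P \<subseteq> {..<n}" "\<omega> \<in> PiE {..<n} (\<lambda>_. seeds M B c)" "\<exists>i\<in>P. bin (\<omega> i) = j" "U \<subseteq> {..<c}"
  shows "toggle_lead P j U \<omega> \<in> PiE {..<n} (\<lambda>_. seeds M B c)"
proof -
  let ?k = "lead_in_bin P j \<omega>"
  have "?k < n" using lead_in_bin(1)[OF finite_subset[OF assms(1)] assms(3)] assms(1) by auto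
  then have "\<omega> ?k \<in> seeds M B c" using assms(2) by (auto simp: PiE_def Pi_def)
  then have "(hash (\<omega> ?k), bin (\<omega> ?k), sym_diff (parities (\<omega> ?k)) U) \<in> seeds M B c"
    using assms(4) by (auto simp: seeds_def)
  then have "toggle_lead P j U \<omega> \<in> PiE (insert ?k {..<n}) (\<lambda>_. seeds M B c)"
    using assms(2) unfolding toggle_lead_def by (intro PiE_fun_upd)
  then show ?thesis using \<open>?k < n\<close> by (simp add: insert_absorb)
qed

lemma bin_pattern_toggle_lead:
  assumes "finite P" "\<exists>i\<in>P. bin (\<omega> i) = j" "U \<subseteq> {..<c}"
  shows "bin_pattern P j c (toggle_lead P j U \<omega>) = sym_diff (bin_pattern P j c \<omega>) U"
proof (rule set_eqI)
  fix a
  show "a \<in> bin_pattern P j c (toggle_lead P j U \<omega>) \<longleftrightarrow> a \<in> sym_diff (bin_pattern P j c \<omega>) U"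
  proof (cases "a \<in> U")
    case True
    have "odd (card {i\<in>P. bin (toggle_lead P j U \<omega> i) = j \<and> a \<in> parities (toggle_lead P j U \<omega> i)})
        \<longleftrightarrow> \<not> odd (card {i\<in>P. bin (\<omega> i) = j \<and> a \<in> parities (\<omega> i)})"
      by (rule odd_card_filter_toggle[OF assms(1) lead_in_bin(1)[OF assms(1,2)]])
         (use True lead_in_bin(2)[OF assms(1,2)] in \<open>auto simp: toggle_lead_def\<close>)
    then show ?thesis using True assms(3) by (auto simp: bin_pattern_def)
  next
    case False
    then have "{i\<in>P. bin (toggle_lead P j U \<omega> i) = j \<and> a \<in> parities (toggle_lead P j U \<omega> i)} =
          {i\<in>P. bin (\<omega> i) = j \<and> a \<in> parities (\<omega> i)}"
      by (auto simp: toggle_lead_def)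
    then show ?thesis using False by (auto simp: bin_pattern_def)
  qed
qed

text \<open>Toggling the parity set of the first coordinate in bin \<open>j\<close> by \<open>U\<close> toggles the observed
  pattern of the bin by \<open>U\<close>, so an occupied bin looks empty on exactly a \<open>2^-c\<close> fraction
  of the seeds.\<close>
lemma card_occupied_bin_even_parities:
  fixes n M B c :: nat
  assumes P: "P \<subseteq> {..<n}"
  defines "\<Omega> \<equiv> PiE {..<n} (\<lambda>_. seeds M B c)"
  shows "card {\<omega>\<in>\<Omega>. (\<exists>i\<in>P. bin (\<omega> i) = j) \<and>
            (\<forall>a<c. even (card {i\<in>P. bin (\<omega> i) = j \<and> a \<in> parities (\<omega> i)}))} * 2 ^ c \<le> card \<Omega>"
proof -
  have finP: "finite P" using P finite_subset by blast
  define A where "A = {\<omega>\<in>\<Omega>. \<exists>i\<in>P. bin (\<omega> i) = j}"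
  have "card {\<omega>\<in>A. bin_pattern P j c \<omega> = {}} * 2 ^ c = card A"
  proof (rule card_level_empty_mult_pow[where act = "toggle_lead P j"])
    show "finite A" by (simp add: A_def \<Omega>_def finite_PiE)
  qed (use P finP toggle_lead_in_PiE bin_pattern_toggle_lead toggle_lead_toggle_lead
      in \<open>auto simp: A_def \<Omega>_def bin_pattern_def\<close>)
  moreover have "card A \<le> card \<Omega>" by (intro card_mono) (auto simp: A_def \<Omega>_def finite_PiE)
  moreover have "{\<omega>\<in>A. bin_pattern P j c \<omega> = {}} = {\<omega>\<in>\<Omega>. (\<exists>i\<in>P. bin (\<omega> i) = j) \<and>
            (\<forall>a<c. even (card {i\<in>P. bin (\<omega> i) = j \<and> a \<in> parities (\<omega> i)}))}"
    by (auto simp: A_def bin_pattern_def)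
  ultimately show ?thesis by simp
qed

section \<open>Linear threshold functions\<close>

definition weight :: "nat \<Rightarrow> (nat \<Rightarrow> real) \<Rightarrow> (nat \<Rightarrow> bool) \<Rightarrow> real" where
  "weight n w x = sum w {i\<in>{..<n}. x i}"

lemma ltf_form_eq_weight: "ltf_form n w \<theta> x = weight n w x - \<theta>"
  unfolding ltf_form_def weight_def by (simp add: sum.inter_filter[symmetric] if_distrib cong: if_cong)

lemma weight_clear:
  assumes "j < n"
  shows "weight n w (z(j := False)) = weight n w z - (if z j then w j else 0)"
proof -
  have "{i\<in>{..<n}. (z(j := False)) i} = {i\<in>{..<n}. z i} - {j}" by auto
  then show ?thesis using assms by (simp add: weight_def sum_diff1)
qed

lemma same_side_of_margin:
  fixes a b \<theta> m :: real
  assumes "m \<le> \<bar>a - \<theta>\<bar>" "m \<le> \<bar>b - \<theta>\<bar>" "\<bar>a - b\<bar> < 2 * m"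
  shows "\<theta> \<le> a \<longleftrightarrow> \<theta> \<le> b"
  using assms unfolding abs_if by (auto split: if_splits)

lemma weight_ge_iff_heavy_part:
  assumes wpos: "\<forall>i<n. 0 \<le> w i" and margin: "\<forall>x\<in>cube n. m \<le> \<bar>weight n w x - \<theta>\<bar>"
    and y: "y \<in> cube n"
  shows "\<theta> \<le> weight n w y \<longleftrightarrow> \<theta> \<le> weight n w (\<lambda>i. y i \<and> 2 * m \<le> w i)"
proof -
  define light where "light = {i\<in>{..<n}. w i < 2 * m}"
  have "\<theta> \<le> weight n w y \<longleftrightarrow> \<theta> \<le> weight n w (\<lambda>i. y i \<and> i \<notin> J)" if "finite J" "J \<subseteq> light" for J
    using that
  proof (induction J rule: finite_induct)
    case (insert j J)
    let ?z = "\<lambda>i. y i \<and> i \<notin> J"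
    have j: "j < n" "0 \<le> w j" "w j < 2 * m" using insert.prems wpos by (auto simp: light_def)
    have drop: "(\<lambda>i. y i \<and> i \<notin> insert j J) = ?z(j := False)" by (auto simp: fun_eq_iff)
    have "?z \<in> cube n" "?z(j := False) \<in> cube n" using y by (auto simp: cube_def)
    then have "m \<le> \<bar>weight n w ?z - \<theta>\<bar>" "m \<le> \<bar>weight n w (?z(j := False)) - \<theta>\<bar>"
      using margin by auto
    moreover have "\<bar>weight n w ?z - weight n w (?z(j := False))\<bar> < 2 * m"
      using j by (simp add: weight_clear[OF j(1)])
    ultimately have "\<theta> \<le> weight n w ?z \<longleftrightarrow> \<theta> \<le> weight n w (?z(j := False))"
      by (intro same_side_of_margin)
    with drop insert show ?case by simp
  qed simp
  moreover have "(\<lambda>i. y i \<and> i \<notin> light) = (\<lambda>i. y i \<and> 2 * m \<le> w i)"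
    using y by (auto simp: light_def cube_def fun_eq_iff)
  moreover have "finite light" by (simp add: light_def)
  ultimately show ?thesis by simp
qed

section \<open>The sketch\<close>

text \<open>A seed gives every coordinate \<open>i\<close> a
  hash value \<open>hash (\<omega> i) < M\<close>, a bin \<open>bin (\<omega> i) < nbins\<close> and a random set
  \<open>parities (\<omega> i) \<subseteq> {..<c}\<close>; only relevant coordinates (\<open>w i \<ge> 2m\<close>) enter the sketch.
  The first \<open>r\<close> bits are the XOR of the code words of the buckets (weight class, hash value)
  of the relevant ones of \<open>x\<close>; the remaining \<open>nbins * c\<close> bits are, for each bin, \<open>c\<close> random
  parities of the relevant ones of \<open>x\<close> in it.\<close>
locale ltf_sketch =
  fixes n :: nat and \<theta> m :: real and w :: "nat \<Rightarrow> real" and e :: nat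
  assumes weights_nonneg: "\<forall>i<n. 0 \<le> w i" and margin_pos: "0 < m"
    and margin: "\<forall>x\<in>cube n. m \<le> \<bar>weight n w x - \<theta>\<bar>" and threshold_ge: "2 * m \<le> \<theta>"
    and K_le_pow: "nat \<lceil>\<theta> / (2 * m)\<rceil> \<le> 2 ^ e"
begin

definition K :: nat where
  "K = nat \<lceil>\<theta> / (2 * m)\<rceil>"
definition Q :: nat where
  "Q = 2 * K"
definition M :: nat where
  "M = 6 * K ^ 2"
definition nbins :: nat where
  "nbins = 12 * K"
definition c :: nat where
  "c = e + 7"
definition \<delta> :: real where
  "\<delta> = m / real Q"
definition heavy_class :: nat where
  "heavy_class = nat \<lfloor>\<theta> / \<delta>\<rfloor> + 1"
definition N :: nat where
  "N = (heavy_class + 1) * M"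
definition D :: nat where
  "D = 3 * K"
definition r :: nat where
  "r = D * (4 * e + 7)"

definition relevant :: "nat \<Rightarrow> bool" where
  "relevant i \<longleftrightarrow> 2 * m \<le> w i"
definition wclass :: "nat \<Rightarrow> nat" where
  "wclass i = (if \<theta> \<le> w i then heavy_class else nat \<lfloor>w i / \<delta>\<rfloor>)"
definition class_weight :: "nat \<Rightarrow> real" where
  "class_weight k = (if k = heavy_class then \<theta> else real k * \<delta>)"
definition \<Omega> :: "seed_map set" where
  "\<Omega> = PiE {..<n} (\<lambda>_. seeds M nbins c)"
definition code :: "nat \<Rightarrow> nat set" where
  "code = (SOME col. (\<forall>b. col b \<subseteq> {..<r}) \<and> xor_independent N D col)"
definition bucket :: "seed_map \<Rightarrow> nat \<Rightarrow> nat" where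
  "bucket \<omega> i = wclass i * M + hash (\<omega> i)"
definition bucket_weight :: "nat set \<Rightarrow> real" where
  "bucket_weight Z = (\<Sum>b\<in>Z. class_weight (b div M))"

definition code_sketch :: "seed_map \<Rightarrow> nat set list" where
  "code_sketch \<omega> = map (\<lambda>l. {i\<in>{..<n}. relevant i \<and> l \<in> code (bucket \<omega> i)}) [0..<r]"
definition bin_sketch :: "seed_map \<Rightarrow> nat set list" where
  "bin_sketch \<omega> =
     map (\<lambda>k. {i\<in>{..<n}. relevant i \<and> bin (\<omega> i) = k div c \<and> k mod c \<in> parities (\<omega> i)}) [0..<nbins * c]"
definition sketch :: "seed_map \<Rightarrow> nat set list" where
  "sketch \<omega> = code_sketch \<omega> @ bin_sketch \<omega>"

definition code_accepts :: "bool list \<Rightarrow> bool" where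
  "code_accepts s \<longleftrightarrow>
     \<not> (\<exists>Z. Z \<subseteq> {..<N} \<and> card Z \<le> K \<and> bucket_weight Z < \<theta> \<and> s = map (\<lambda>l. l \<in> xor_sum code Z) [0..<r])"
definition bins_accept :: "bool list \<Rightarrow> bool" where
  "bins_accept s \<longleftrightarrow> K \<le> card {j\<in>{..<nbins}. \<exists>a<c. s ! (j * c + a)}"
definition decoder :: "bool list \<Rightarrow> real" where
  "decoder bs = (if code_accepts (take r bs) \<or> bins_accept (drop r bs) then 1 else 0)"

abbreviation "outcome x \<omega> \<equiv> decoder (map (\<lambda>S. chi S x) (sketch \<omega>))"

definition support :: "(nat \<Rightarrow> bool) \<Rightarrow> nat set" where
  "support x = {i\<in>{..<n}. relevant i \<and> x i}"
definition odd_buckets :: "(nat \<Rightarrow> bool) \<Rightarrow> seed_map \<Rightarrow> nat set" where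
  "odd_buckets x \<omega> = {b. odd (card {i\<in>support x. bucket \<omega> i = b})}"
definition odd_bins :: "(nat \<Rightarrow> bool) \<Rightarrow> seed_map \<Rightarrow> nat set" where
  "odd_bins x \<omega> =
  {j\<in>{..<nbins}. \<exists>a<c. odd (card {i\<in>support x. bin (\<omega> i) = j \<and> a \<in> parities (\<omega> i)})}"

lemma K_pos: "1 \<le> K"
proof -
  have "1 \<le> \<theta> / (2 * m)" using threshold_ge margin_pos by simp
  then show ?thesis unfolding K_def by linarith
qed

lemma le_K: "\<theta> / (2 * m) \<le> real K"
  unfolding K_def by linarith

lemma K_le: "real K \<le> \<theta> / m"
proof -
  have "0 \<le> \<theta> / (2 * m)" using threshold_ge margin_pos by simp
  then have "real K \<le> \<theta> / (2 * m) + 1" unfolding K_def by linarith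
  also have "\<dots> \<le> \<theta> / m" using threshold_ge margin_pos by (simp add: field_simps)
  finally show ?thesis .
qed

lemma Q_pos: "0 < Q" using K_pos by (simp add: Q_def)

lemma M_pos: "0 < M" using K_pos by (simp add: M_def)

lemma \<delta>_pos: "0 < \<delta>" using margin_pos Q_pos by (simp add: \<delta>_def)

lemma heavy_class_le: "heavy_class \<le> 4 * K ^ 2 + 1"
proof -
  have "\<theta> / \<delta> = (\<theta> / m) * real Q" using margin_pos Q_pos by (simp add: \<delta>_def field_simps)
  also have "\<dots> \<le> 2 * real K * real Q"
    using le_K margin_pos by (intro mult_right_mono) (auto simp: field_simps)
  finally have "\<theta> / \<delta> \<le> 4 * real K ^ 2" by (simp add: Q_def power2_eq_square)
  then have "\<lfloor>\<theta> / \<delta>\<rfloor> \<le> 4 * int K ^ 2" by (simp add: floor_le_iff)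
  then show ?thesis unfolding heavy_class_def by (simp add: nat_le_iff)
qed

lemma Suc_N_lt_pow: "N + 1 < 2 ^ (4 * e + 7)"
proof -
  have "1 \<le> K ^ 2" using K_pos by simp
  then have "heavy_class + 1 \<le> 6 * K ^ 2" using heavy_class_le by linarith
  then have "N \<le> 36 * K ^ 4" unfolding N_def M_def
    using mult_le_mono1[of "heavy_class + 1" "6 * K ^ 2" "6 * K ^ 2"] by (simp add: power2_eq_square power4_eq_xxxx)
  moreover have "1 \<le> K ^ 4" using K_pos by simp
  ultimately have "N + 1 \<le> 37 * K ^ 4" by linarith
  also have "\<dots> \<le> 37 * (2 ^ e) ^ 4" using K_le_pow by (simp add: K_def power_mono)
  also have "\<dots> < 2 ^ (4 * e + 7)" by (simp add: power_add power_mult[symmetric] mult.commute)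
  finally show ?thesis .
qed

lemma code_subset: "code b \<subseteq> {..<r}" and xor_independent_code: "xor_independent N D code"
proof -
  have "1 \<le> D" using K_pos by (simp add: D_def)
  moreover have "(N + 1) ^ D < (2 ^ (4 * e + 7)) ^ D"
    using Suc_N_lt_pow \<open>1 \<le> D\<close> by (intro power_strict_mono) auto
  then have "(N + 1) ^ D < 2 ^ r" by (simp add: r_def power_mult[symmetric] mult.commute)
  ultimately have "\<exists>col. (\<forall>b. col b \<subseteq> {..<r}) \<and> xor_independent N D col"
    by (rule exists_xor_independent)
  from someI_ex[OF this] show "code b \<subseteq> {..<r}" "xor_independent N D code"
    unfolding code_def by auto
qed

lemma xor_sum_code_subset: "xor_sum code J \<subseteq> {..<r}"
  by (rule xor_sum_subset) (rule code_subset)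

lemma wclass_eq_heavy_iff: "wclass i = heavy_class \<longleftrightarrow> \<theta> \<le> w i"
  and wclass_le: "wclass i \<le> heavy_class"
proof -
  have "nat \<lfloor>w i / \<delta>\<rfloor> < heavy_class" if "\<not> \<theta> \<le> w i"
    using that \<delta>_pos floor_mono[of "w i / \<delta>" "\<theta> / \<delta>"] unfolding heavy_class_def
    by (simp add: divide_right_mono)
  then show "wclass i = heavy_class \<longleftrightarrow> \<theta> \<le> w i" "wclass i \<le> heavy_class"
    unfolding wclass_def by force+
qed

lemma class_weight_bounds:
  assumes "0 \<le> w i"
  shows "0 \<le> class_weight (wclass i)" "class_weight (wclass i) \<le> w i"
    and "\<theta> \<le> w i \<Longrightarrow> class_weight (wclass i) = \<theta>"
    and "\<not> \<theta> \<le> w i \<Longrightarrow> w i - \<delta> \<le> class_weight (wclass i)"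
proof -
  have "0 \<le> w i / \<delta>" using assms \<delta>_pos by simp
  then have light: "class_weight (wclass i) = of_int \<lfloor>w i / \<delta>\<rfloor> * \<delta>" if "\<not> \<theta> \<le> w i"
    using that wclass_eq_heavy_iff[of i] by (simp add: class_weight_def wclass_def)
  have "of_int \<lfloor>w i / \<delta>\<rfloor> * \<delta> \<le> w i" "w i - \<delta> \<le> of_int \<lfloor>w i / \<delta>\<rfloor> * \<delta>"
    using \<delta>_pos floor_divide_lower[of \<delta> "w i"] floor_divide_upper[of \<delta> "w i"] by (auto simp: algebra_simps)
  moreover have "0 \<le> of_int \<lfloor>w i / \<delta>\<rfloor> * \<delta>" using assms \<delta>_pos by simp
  moreover show "\<theta> \<le> w i \<Longrightarrow> class_weight (wclass i) = \<theta>"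
    by (simp add: class_weight_def wclass_eq_heavy_iff)
  ultimately show "0 \<le> class_weight (wclass i)" "class_weight (wclass i) \<le> w i"
    "\<not> \<theta> \<le> w i \<Longrightarrow> w i - \<delta> \<le> class_weight (wclass i)"
    using light threshold_ge margin_pos by (cases "\<theta> \<le> w i"; simp)+
qed

lemma finite_\<Omega>: "finite \<Omega>"
  unfolding \<Omega>_def by (simp add: finite_PiE)

lemma \<Omega>_nonempty: "\<Omega> \<noteq> {}"
proof -
  have "(0, 0, {}) \<in> seeds M nbins c" using M_pos K_pos by (auto simp: seeds_def nbins_def)
  then show ?thesis unfolding \<Omega>_def by (auto simp: PiE_eq_empty_iff)
qed

lemma seed_in_range:
  assumes "\<omega> \<in> \<Omega>" "i < n"
  shows "hash (\<omega> i) < M" "bin (\<omega> i) < nbins" "parities (\<omega> i) \<subseteq> {..<c}"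
proof -
  have "\<omega> i \<in> {..<M} \<times> {..<nbins} \<times> Pow {..<c}"
    using assms by (auto simp: \<Omega>_def seeds_def PiE_def Pi_def)
  then show "hash (\<omega> i) < M" "bin (\<omega> i) < nbins" "parities (\<omega> i) \<subseteq> {..<c}"
    by (auto simp: mem_Times_iff)
qed

lemma bucket_div_M: "\<omega> \<in> \<Omega> \<Longrightarrow> i < n \<Longrightarrow> bucket \<omega> i div M = wclass i"
  and bucket_mod_M: "\<omega> \<in> \<Omega> \<Longrightarrow> i < n \<Longrightarrow> bucket \<omega> i mod M = hash (\<omega> i)"
  using seed_in_range(1) M_pos by (auto simp: bucket_def)

lemma bucket_lt_N:
  assumes "\<omega> \<in> \<Omega>" "i < n"
  shows "bucket \<omega> i < N"
proof -
  have "bucket \<omega> i < (wclass i + 1) * M" using seed_in_range[OF assms] by (simp add: bucket_def)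
  also have "\<dots> \<le> (heavy_class + 1) * M" using wclass_le by (intro mult_le_mono1) simp
  finally show ?thesis unfolding N_def .
qed

lemma finite_support: "finite (support x)"
  unfolding support_def by simp

lemma support_subset: "support x \<subseteq> {..<n}"
  unfolding support_def by auto

lemma sum_support_le_weight: "sum w (support x) \<le> weight n w x"
  unfolding weight_def support_def using weights_nonneg by (intro sum_mono2) auto

lemma card_support_mult_le: "real (card (support x)) * (2 * m) \<le> sum w (support x)"
  using sum_mono[of "support x" "\<lambda>_. 2 * m" w] by (simp add: support_def relevant_def)

lemma odd_bins_subset: "odd_bins x \<omega> \<subseteq> (\<lambda>i. bin (\<omega> i)) ` support x"
  unfolding odd_bins_def by (force dest!: odd_pos simp: card_gt_0_iff)

lemma odd_buckets_subset: "odd_buckets x \<omega> \<subseteq> bucket \<omega> ` support x"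
  unfolding odd_buckets_def by (force dest!: odd_pos simp: card_gt_0_iff)

lemma odd_buckets_subset_N: "\<omega> \<in> \<Omega> \<Longrightarrow> odd_buckets x \<omega> \<subseteq> {..<N}"
  using odd_buckets_subset support_subset bucket_lt_N by fastforce

lemma map_chi_code_sketch:
  "map (\<lambda>S. chi S x) (code_sketch \<omega>) = map (\<lambda>l. l \<in> xor_sum code (odd_buckets x \<omega>)) [0..<r]"
proof -
  have "chi {i\<in>{..<n}. relevant i \<and> l \<in> code (bucket \<omega> i)} x
      = odd (card {i\<in>support x. l \<in> code (bucket \<omega> i)})" for l
    unfolding chi_def support_def by (simp add: conj_commute conj_left_commute)
  also have "\<dots> l \<longleftrightarrow> l \<in> xor_sum code (odd_buckets x \<omega>)" for l
    using odd_card_regroup[OF finite_support, where R = "\<lambda>b. l \<in> code b" and \<beta> = "bucket \<omega>"]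
    unfolding xor_sum_def odd_buckets_def by (simp add: conj_commute)
  finally show ?thesis unfolding code_sketch_def by simp
qed

lemma map_chi_bin_sketch:
  "map (\<lambda>S. chi S x) (bin_sketch \<omega>) = map (\<lambda>k. odd (card {i\<in>support x. bin (\<omega> i) = k div c \<and>
     k mod c \<in> parities (\<omega> i)})) [0..<nbins * c]"
  unfolding bin_sketch_def chi_def support_def by (simp add: conj_commute conj_left_commute)

lemma outcome_eq:
  "outcome x \<omega> =
   (if code_accepts (map (\<lambda>l. l \<in> xor_sum code (odd_buckets x \<omega>)) [0..<r]) \<or> K \<le> card (odd_bins x \<omega>)
    then 1 else 0)"
proof -
  let ?bits = "map (\<lambda>S. chi S x) (sketch \<omega>)"
  have take: "take r ?bits = map (\<lambda>l. l \<in> xor_sum code (odd_buckets x \<omega>)) [0..<r]"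
    unfolding sketch_def map_append map_chi_code_sketch[symmetric] by (simp add: code_sketch_def)
  have "drop r ?bits ! (j * c + a) = odd (card {i\<in>support x. bin (\<omega> i) = j \<and> a \<in> parities (\<omega> i)})"
    if "j < nbins" "a < c" for j a
  proof -
    have "j * c + a < nbins * c"
      using that mult_le_mono1[of "Suc j" nbins c] by simp
    then show ?thesis
      unfolding sketch_def map_append map_chi_bin_sketch using that
      by (simp add: code_sketch_def)
  qed
  then have "{j\<in>{..<nbins}. \<exists>a<c. drop r ?bits ! (j * c + a)} = odd_bins x \<omega>"
    unfolding odd_bins_def by auto
  then show ?thesis unfolding decoder_def bins_accept_def take by simp
qed

lemma bucket_weight_odd_buckets_le:
  assumes "\<omega> \<in> \<Omega>"
  shows "bucket_weight (odd_buckets x \<omega>) \<le> sum w (support x)"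
proof -
  have classes: "class_weight (bucket \<omega> i div M) = class_weight (wclass i)" "0 \<le> w i"
    if "i \<in> support x" for i
  proof -
    have "i < n" using that support_subset by blast
    then show "class_weight (bucket \<omega> i div M) = class_weight (wclass i)" "0 \<le> w i"
      using bucket_div_M[OF assms] weights_nonneg by auto
  qed
  then have "bucket_weight (odd_buckets x \<omega>) \<le> (\<Sum>b\<in>bucket \<omega> ` support x. class_weight (b div M))"
    unfolding bucket_weight_def using odd_buckets_subset finite_support class_weight_bounds(1)
    by (intro sum_mono2) auto
  also have "\<dots> \<le> (\<Sum>i\<in>support x. class_weight (bucket \<omega> i div M))"
    by (rule sum_image_le[OF finite_support, unfolded o_def]) (simp add: classes class_weight_bounds(1))
  also have "\<dots> = (\<Sum>i\<in>support x. class_weight (wclass i))"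
    by (intro sum.cong refl) (simp add: classes)
  also have "\<dots> \<le> sum w (support x)"
    using classes class_weight_bounds(2) by (intro sum_mono) auto
  finally show ?thesis .
qed

text \<open>On inputs with \<open>f x = 0\<close> the sketch never errs: few relevant coordinates are set, so
  few bins are hit and the odd buckets themselves witness rejection.\<close>
lemma outcome_eq_0:
  assumes "weight n w x < \<theta>" "\<omega> \<in> \<Omega>"
  shows "outcome x \<omega> = 0"
proof -
  have light: "sum w (support x) < \<theta>" using sum_support_le_weight assms(1) by (rule le_less_trans)
  then have "real (card (support x)) * (2 * m) < \<theta>" using card_support_mult_le[of x] by linarith
  then have "real (card (support x)) < \<theta> / (2 * m)" using margin_pos by (simp add: field_simps)
  then have small: "card (support x) < K" using le_K by linarith
  have "card (odd_bins x \<omega>) \<le> card (support x)"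
    using card_mono[OF _ odd_bins_subset] card_image_le[OF finite_support] finite_support
    by (meson finite_imageI le_trans)
  moreover have "card (odd_buckets x \<omega>) \<le> card (support x)"
    using card_mono[OF _ odd_buckets_subset] card_image_le[OF finite_support] finite_support
    by (meson finite_imageI le_trans)
  moreover have "bucket_weight (odd_buckets x \<omega>) < \<theta>"
    using bucket_weight_odd_buckets_le[OF assms(2)] light by (rule le_less_trans)
  ultimately show ?thesis
    using small odd_buckets_subset_N[OF assms(2)] unfolding outcome_eq code_accepts_def by force
qed

section \<open>Correctness and size\<close>


lemma sum_support_ge:
  assumes x: "x \<in> cube n" and "\<theta> \<le> weight n w x"
  shows "\<theta> + m \<le> sum w (support x)"
proof -
  let ?heavy = "\<lambda>i. x i \<and> 2 * m \<le> w i"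
  have "weight n w ?heavy = sum w (support x)"
    unfolding weight_def support_def relevant_def by (rule sum.cong) auto
  moreover have "\<theta> \<le> weight n w ?heavy"
    using weight_ge_iff_heavy_part[OF weights_nonneg margin x] assms(2) by simp
  moreover have "?heavy \<in> cube n" using x by (auto simp: cube_def)
  then have "m \<le> \<bar>weight n w ?heavy - \<theta>\<bar>" using margin by auto
  ultimately show ?thesis by linarith
qed

lemma inj_on_bucket:
  assumes "\<omega> \<in> \<Omega>" "inj_on (\<lambda>i. hash (\<omega> i)) (support x)"
  shows "inj_on (bucket \<omega>) (support x)"
proof (rule inj_onI)
  fix i k assume ik: "i \<in> support x" "k \<in> support x" "bucket \<omega> i = bucket \<omega> k"
  then have "hash (\<omega> i) = hash (\<omega> k)"
    using bucket_mod_M[OF assms(1)] support_subset by (metis lessThan_iff subsetD)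
  then show "i = k" using assms(2) ik by (auto dest: inj_onD)
qed

lemma odd_buckets_eq_image:
  assumes "inj_on (bucket \<omega>) (support x)"
  shows "odd_buckets x \<omega> = bucket \<omega> ` support x"
proof
  show "bucket \<omega> ` support x \<subseteq> odd_buckets x \<omega>"
  proof
    fix b assume "b \<in> bucket \<omega> ` support x"
    then obtain i0 where "i0 \<in> support x" "b = bucket \<omega> i0" by auto
    then have "{i\<in>support x. bucket \<omega> i = b} = {i0}" using assms by (auto dest: inj_onD)
    then show "b \<in> odd_buckets x \<omega>" unfolding odd_buckets_def by simp
  qed
qed (rule odd_buckets_subset)

text \<open>Rounding the relevant weights down to multiples of \<open>\<delta> = m / Q\<close> loses less than the margin
  \<open>m\<close> when fewer than \<open>Q\<close> coordinates are involved.\<close>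
lemma bucket_weight_ge:
  assumes x: "x \<in> cube n" "\<theta> \<le> weight n w x" and few: "card (support x) < Q"
    and \<omega>: "\<omega> \<in> \<Omega>" and inj: "inj_on (bucket \<omega>) (support x)"
  shows "\<theta> \<le> bucket_weight (odd_buckets x \<omega>)"
proof -
  have w: "0 \<le> w i" "i < n" if "i \<in> support x" for i
    using that support_subset weights_nonneg by auto
  have "bucket_weight (odd_buckets x \<omega>) = (\<Sum>i\<in>support x. class_weight (bucket \<omega> i div M))"
    unfolding bucket_weight_def odd_buckets_eq_image[OF inj] by (simp add: sum.reindex[OF inj])
  also have "\<dots> = (\<Sum>i\<in>support x. class_weight (wclass i))"
    using bucket_div_M[OF \<omega>] w by (intro sum.cong) auto
  finally have sum_eq: "bucket_weight (odd_buckets x \<omega>) = (\<Sum>i\<in>support x. class_weight (wclass i))" .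
  show ?thesis
  proof (cases "\<exists>i\<in>support x. \<theta> \<le> w i")
    case True
    then obtain i0 where i0: "i0 \<in> support x" "\<theta> \<le> w i0" by auto
    have "\<theta> = class_weight (wclass i0)" using class_weight_bounds(3)[OF w(1)[OF i0(1)] i0(2)] by simp
    also have "\<dots> \<le> (\<Sum>i\<in>support x. class_weight (wclass i))"
      using i0 finite_support class_weight_bounds(1) w by (intro member_le_sum) auto
    finally show ?thesis using sum_eq by simp
  next
    case False
    have "real (card (support x)) * \<delta> \<le> real Q * \<delta>" using few \<delta>_pos by (intro mult_right_mono) auto
    also have "\<dots> = m" using Q_pos by (simp add: \<delta>_def)
    finally have "\<theta> \<le> sum w (support x) - real (card (support x)) * \<delta>"
      using sum_support_ge[OF x] by linarith
    also have "\<dots> = (\<Sum>i\<in>support x. w i - \<delta>)" by (simp add: sum_subtractf)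
    also have "\<dots> \<le> (\<Sum>i\<in>support x. class_weight (wclass i))"
      using False class_weight_bounds(4) w by (intro sum_mono) auto
    finally show ?thesis using sum_eq by simp
  qed
qed

text \<open>Two sets of at most \<open>2K\<close> and \<open>K\<close> buckets with the same code XOR differ by at most \<open>D\<close>
  buckets whose code words sum to zero, hence coincide.\<close>
lemma code_accepts_heavy:
  assumes Y: "Y \<subseteq> {..<N}" "card Y \<le> Q" "\<theta> \<le> bucket_weight Y"
  shows "code_accepts (map (\<lambda>l. l \<in> xor_sum code Y) [0..<r])"
  unfolding code_accepts_def
proof
  assume "\<exists>Z. Z \<subseteq> {..<N} \<and> card Z \<le> K \<and> bucket_weight Z < \<theta> \<and>
    map (\<lambda>l. l \<in> xor_sum code Y) [0..<r] = map (\<lambda>l. l \<in> xor_sum code Z) [0..<r]"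
  then obtain Z where Z: "Z \<subseteq> {..<N}" "card Z \<le> K" "bucket_weight Z < \<theta>"
    and bits: "map (\<lambda>l. l \<in> xor_sum code Y) [0..<r] = map (\<lambda>l. l \<in> xor_sum code Z) [0..<r]"
    by blast
  have "xor_sum code Y = xor_sum code Z"
    using bits xor_sum_code_subset[of Y] xor_sum_code_subset[of Z] by (auto simp: map_eq_conv)
  moreover have fin: "finite Y" "finite Z" using Y(1) Z(1) finite_subset by auto
  ultimately have "xor_sum code (sym_diff Y Z) = {}" by (simp add: xor_sum_symdiff)
  moreover have "card (sym_diff Y Z) \<le> card (Y \<union> Z)" using fin by (intro card_mono) auto
  then have "card (sym_diff Y Z) \<le> D" using card_Un_le[of Y Z] Y(2) Z(2) by (simp add: D_def Q_def)
  moreover have "sym_diff Y Z \<subseteq> {..<N}" using Y(1) Z(1) by auto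
  ultimately have "sym_diff Y Z = {}"
    using xor_independent_code[unfolded xor_independent_def, rule_format, of "sym_diff Y Z"] by auto
  then have "Y = Z" by blast
  then show False using Y(3) Z(3) by simp
qed

lemma outcome_eq_1_if_hash_inj:
  assumes x: "x \<in> cube n" "\<theta> \<le> weight n w x" and few: "card (support x) < Q"
    and \<omega>: "\<omega> \<in> \<Omega>" and inj: "inj_on (\<lambda>i. hash (\<omega> i)) (support x)"
  shows "outcome x \<omega> = 1"
proof -
  have inj_bucket: "inj_on (bucket \<omega>) (support x)" by (rule inj_on_bucket[OF \<omega> inj])
  have "card (odd_buckets x \<omega>) \<le> Q"
    unfolding odd_buckets_eq_image[OF inj_bucket]
    using card_image_le[OF finite_support, of "bucket \<omega>" x] few by linarith
  then have "code_accepts (map (\<lambda>l. l \<in> xor_sum code (odd_buckets x \<omega>)) [0..<r])"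
    using code_accepts_heavy odd_buckets_subset_N[OF \<omega>] bucket_weight_ge[OF x few \<omega> inj_bucket]
    by blast
  then show ?thesis by (simp add: outcome_eq)
qed

lemma card_failures_few_relevant:
  assumes x: "x \<in> cube n" "\<theta> \<le> weight n w x" and few: "card (support x) < Q"
  shows "3 * card {\<omega>\<in>\<Omega>. outcome x \<omega> \<noteq> 1} \<le> card \<Omega>"
proof (rule le_of_mult_le_scaled[OF _ _ M_pos])
  have "card {\<omega>\<in>\<Omega>. outcome x \<omega> \<noteq> 1} \<le> card {\<omega>\<in>\<Omega>. \<not> inj_on (\<lambda>i. hash (\<omega> i)) (support x)}"
    using outcome_eq_1_if_hash_inj[OF x few] finite_\<Omega> by (intro card_mono) auto
  then have "card {\<omega>\<in>\<Omega>. outcome x \<omega> \<noteq> 1} * M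
      \<le> card {\<omega>\<in>\<Omega>. \<not> inj_on (\<lambda>i. hash (\<omega> i)) (support x)} * M"
    by (rule mult_le_mono1)
  also have "\<dots> \<le> card (ordered_pairs (support x)) * card \<Omega>"
    unfolding \<Omega>_def using support_subset card_seeds_hash_fibre
    by (intro card_PiE_some_collision) auto
  finally show "card {\<omega>\<in>\<Omega>. outcome x \<omega> \<noteq> 1} * M \<le> card (ordered_pairs (support x)) * card \<Omega>" .
  have "card (support x) * card (support x) < Q * Q" using few by (intro mult_strict_mono) auto
  moreover have "Q * Q = 4 * (K * K)" "M = 6 * (K * K)" by (simp_all add: Q_def M_def power2_eq_square)
  ultimately show "3 * card (ordered_pairs (support x)) \<le> M"
    using card_ordered_pairs_le[OF finite_support, of x] by linarith
qed

lemma outcome_eq_1_if_bins_spread: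
  assumes T: "T \<subseteq> support x" "card T = Q" and \<omega>: "\<omega> \<in> \<Omega>"
    and spread: "card (collisions (\<lambda>i. bin (\<omega> i)) T) \<le> K"
    and heard: "\<And>j. j < nbins \<Longrightarrow> \<exists>i\<in>support x. bin (\<omega> i) = j \<Longrightarrow>
      \<exists>a<c. odd (card {i\<in>support x. bin (\<omega> i) = j \<and> a \<in> parities (\<omega> i)})"
  shows "outcome x \<omega> = 1"
proof -
  have "finite T" using T(1) finite_support finite_subset by blast
  then have "K \<le> card ((\<lambda>i. bin (\<omega> i)) ` T)"
    using card_le_card_image_add_collisions[of T "\<lambda>i. bin (\<omega> i)"] spread T(2) by (simp add: Q_def)
  also have "\<dots> \<le> card (odd_bins x \<omega>)"
  proof (rule card_mono)
    show "(\<lambda>i. bin (\<omega> i)) ` T \<subseteq> odd_bins x \<omega>"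
      using T(1) support_subset seed_in_range(2)[OF \<omega>] heard unfolding odd_bins_def by blast
  qed (simp add: odd_bins_def)
  finally show ?thesis by (simp add: outcome_eq)
qed

lemma card_bin_collisions_many:
  assumes "T \<subseteq> {..<n}" "card T = Q"
  shows "6 * card {\<omega>\<in>\<Omega>. K + 1 \<le> card (collisions (\<lambda>i. bin (\<omega> i)) T)} \<le> card \<Omega>"
proof (rule le_of_mult_le_scaled)
  have "card {\<omega>\<in>\<Omega>. K + 1 \<le> card (collisions (\<lambda>i. bin (\<omega> i)) T)} * (K + 1) * nbins
      \<le> card (ordered_pairs T) * card \<Omega>"
    unfolding \<Omega>_def by (rule card_PiE_many_collisions) (use assms(1) card_seeds_bin_fibre in auto)
  then show "card {\<omega>\<in>\<Omega>. K + 1 \<le> card (collisions (\<lambda>i. bin (\<omega> i)) T)} * ((K + 1) * nbins)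
      \<le> card (ordered_pairs T) * card \<Omega>"
    by (simp only: mult.assoc)
  have "2 * card (ordered_pairs T) \<le> Q * Q"
    using card_ordered_pairs_le[of T] assms finite_subset by fastforce
  then show "6 * card (ordered_pairs T) \<le> (K + 1) * nbins"
    by (simp add: Q_def nbins_def algebra_simps)
  show "0 < (K + 1) * nbins" using K_pos by (simp add: nbins_def)
qed

lemma card_silent_bins:
  "6 * card {\<omega>\<in>\<Omega>. \<exists>j\<in>{..<nbins}. (\<exists>i\<in>support x. bin (\<omega> i) = j) \<and>
      (\<forall>a<c. even (card {i\<in>support x. bin (\<omega> i) = j \<and> a \<in> parities (\<omega> i)}))} \<le> card \<Omega>"
    (is "6 * card {\<omega>\<in>\<Omega>. \<exists>j\<in>{..<nbins}. ?silent j \<omega>} \<le> _")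
proof -
  have "card {\<omega>\<in>\<Omega>. \<exists>j\<in>{..<nbins}. ?silent j \<omega>} * 2 ^ c
      \<le> (\<Sum>j<nbins. card {\<omega>\<in>\<Omega>. ?silent j \<omega>}) * 2 ^ c"
    using card_filter_Bex_le_sum[OF finite_\<Omega>, of "{..<nbins}"] by simp
  also have "\<dots> \<le> (\<Sum>j<nbins. card \<Omega>)"
    unfolding sum_distrib_right \<Omega>_def
    by (intro sum_mono card_occupied_bin_even_parities support_subset)
  finally have "card {\<omega>\<in>\<Omega>. \<exists>j\<in>{..<nbins}. ?silent j \<omega>} * 2 ^ c \<le> nbins * card \<Omega>" by simp
  moreover have "K \<le> 2 ^ e" using K_le_pow by (simp add: K_def)
  then have "6 * nbins \<le> 2 ^ c" by (simp add: nbins_def c_def power_add)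
  ultimately show ?thesis by (rule le_of_mult_le_scaled) simp
qed

lemma card_failures_many_relevant:
  assumes many: "Q \<le> card (support x)"
  shows "3 * card {\<omega>\<in>\<Omega>. outcome x \<omega> \<noteq> 1} \<le> card \<Omega>"
proof -
  obtain T where T: "T \<subseteq> support x" "card T = Q"
    using obtain_subset_with_card_n[OF many] by metis
  define E1 where "E1 = {\<omega>\<in>\<Omega>. K + 1 \<le> card (collisions (\<lambda>i. bin (\<omega> i)) T)}"
  define E2 where "E2 = {\<omega>\<in>\<Omega>. \<exists>j\<in>{..<nbins}. (\<exists>i\<in>support x. bin (\<omega> i) = j) \<and>
      (\<forall>a<c. even (card {i\<in>support x. bin (\<omega> i) = j \<and> a \<in> parities (\<omega> i)}))}"
  have "{\<omega>\<in>\<Omega>. outcome x \<omega> \<noteq> 1} \<subseteq> E1 \<union> E2"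
  proof (rule subsetI, rule ccontr)
    fix \<omega> assume "\<omega> \<in> {\<omega>\<in>\<Omega>. outcome x \<omega> \<noteq> 1}" "\<omega> \<notin> E1 \<union> E2"
    then show False
      using outcome_eq_1_if_bins_spread[OF T, of \<omega>] unfolding E1_def E2_def by auto
  qed
  then have "card {\<omega>\<in>\<Omega>. outcome x \<omega> \<noteq> 1} \<le> card (E1 \<union> E2)"
    by (intro card_mono) (auto simp: E1_def E2_def finite_\<Omega>)
  then have "card {\<omega>\<in>\<Omega>. outcome x \<omega> \<noteq> 1} \<le> card E1 + card E2"
    using card_Un_le[of E1 E2] by linarith
  moreover have "6 * card E1 \<le> card \<Omega>"
    unfolding E1_def using T support_subset by (intro card_bin_collisions_many) auto
  moreover have "6 * card E2 \<le> card \<Omega>" unfolding E2_def by (rule card_silent_bins)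
  ultimately show ?thesis by linarith
qed

lemma card_failures:
  assumes "x \<in> cube n" "\<theta> \<le> weight n w x"
  shows "3 * card {\<omega>\<in>\<Omega>. outcome x \<omega> \<noteq> 1} \<le> card \<Omega>"
  using card_failures_few_relevant[OF assms] card_failures_many_relevant by (cases "card (support x) < Q") auto

lemma prob_decoder_eq:
  "measure_pmf.prob (map_pmf sketch (pmf_of_set \<Omega>)) {Ss. decoder (map (\<lambda>S. chi S x) Ss) = y}
     = real (card {\<omega>\<in>\<Omega>. outcome x \<omega> = y}) / real (card \<Omega>)"
proof -
  have "{\<omega>\<in>\<Omega>. outcome x \<omega> = y} = \<Omega> \<inter> {\<omega>. outcome x \<omega> = y}" by blast
  then show ?thesis
    by (simp add: measure_map_pmf measure_pmf_of_set[OF \<Omega>_nonempty finite_\<Omega>] vimage_def)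
qed

lemma sketchable_ltf:
  assumes f: "\<forall>x\<in>cube n. f x = sgn01 (ltf_form n w \<theta> x)"
  shows "sketchable n (1/3) f (r + nbins * c)"
  unfolding sketchable_def
proof (intro exI[of _ "map_pmf sketch (pmf_of_set \<Omega>)"] exI[of _ decoder] conjI ballI)
  fix Ss assume "Ss \<in> set_pmf (map_pmf sketch (pmf_of_set \<Omega>))"
  then obtain \<omega> where "Ss = sketch \<omega>" using finite_\<Omega> \<Omega>_nonempty by auto
  then show "length Ss = r + nbins * c" "S \<in> set Ss \<Longrightarrow> S \<subseteq> {..<n}" for S
    by (auto simp: sketch_def code_sketch_def bin_sketch_def)
next
  fix x assume x: "x \<in> cube n"
  have card_pos: "0 < card \<Omega>" using finite_\<Omega> \<Omega>_nonempty by (simp add: card_gt_0_iff)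
  show "1 - 1/3 \<le> measure_pmf.prob (map_pmf sketch (pmf_of_set \<Omega>)) {Ss. decoder (map (\<lambda>S. chi S x) Ss) = f x}"
  proof (cases "weight n w x < \<theta>")
    case True
    then have "f x = 0" using f x by (simp add: sgn01_def ltf_form_eq_weight)
    then have "{\<omega>\<in>\<Omega>. outcome x \<omega> = f x} = \<Omega>" using outcome_eq_0[OF True] by auto
    then show ?thesis using card_pos unfolding prob_decoder_eq by simp
  next
    case False
    then have fx: "f x = 1" using f x by (simp add: sgn01_def ltf_form_eq_weight)
    have "card {\<omega>\<in>\<Omega>. outcome x \<omega> = 1} + card {\<omega>\<in>\<Omega>. outcome x \<omega> \<noteq> 1}
        = card ({\<omega>\<in>\<Omega>. outcome x \<omega> = 1} \<union> {\<omega>\<in>\<Omega>. outcome x \<omega> \<noteq> 1})"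
      using finite_\<Omega> by (intro card_Un_disjoint[symmetric]) auto
    also have "\<dots> = card \<Omega>" by (rule arg_cong[where f = card]) blast
    finally have "card \<Omega> = card {\<omega>\<in>\<Omega>. outcome x \<omega> = 1} + card {\<omega>\<in>\<Omega>. outcome x \<omega> \<noteq> 1}" ..
    then have "2 * real (card \<Omega>) \<le> 3 * real (card {\<omega>\<in>\<Omega>. outcome x \<omega> = 1})"
      using card_failures[OF x] False by linarith
    then show ?thesis using card_pos unfolding prob_decoder_eq fx by (simp add: field_simps)
  qed
qed

lemma sketch_length: "r + nbins * c = K * (24 * e + 105)"
  by (simp add: r_def nbins_def c_def D_def algebra_simps)

end

lemma sketch_size_le:
  fixes t :: real and K e :: nat
  assumes t: "2 \<le> t" and K: "real K \<le> t" and e: "2 ^ e < 2 * K"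
  shows "real (K * (24 * e + 105)) \<le> 400 * t * ln t"
proof -
  have "real (2 ^ e) < real (2 * K)" using e by (simp only: of_nat_less_iff)
  then have "(2::real) ^ e < 2 * t" using K by simp
  then have "real e < log 2 (2 * t)" using t by (simp add: less_log_iff powr_realpow)
  also have "\<dots> = 1 + log 2 t" using t by (simp add: log_mult)
  finally have "real (K * (24 * e + 105)) \<le> t * (24 * (1 + log 2 t) + 105)"
    using K by (simp, intro mult_mono) auto
  also have "\<dots> \<le> t * (153 * log 2 t)" using t by (intro mult_left_mono) auto
  also have "\<dots> = 153 / ln 2 * (t * ln t)" by (simp add: log_def)
  also have "\<dots> \<le> 400 * (t * ln t)"
  proof -
    have "ln (1/2::real) \<le> 1/2 - 1" by (rule ln_le_minus_one) simp
    then have "153 / ln 2 \<le> (400::real)" by (simp add: ln_div divide_le_eq)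
    then show ?thesis using t by (intro mult_right_mono) auto
  qed
  finally show ?thesis by simp
qed

lemma exists_pow2_between:
  fixes K :: nat
  assumes "1 \<le> K"
  shows "\<exists>e. K \<le> 2 ^ e \<and> 2 ^ e < 2 * K"
proof (cases "K = 1")
  case True
  then show ?thesis by (intro exI[of _ 0]) simp
next
  case False
  then obtain e where "2 ^ e < K" "K \<le> 2 ^ (e + 1)"
    using ex_power_ivl2[of 2 K] assms by auto
  then show ?thesis by (intro exI[of _ "e + 1"]) auto
qed

theorem mainTheorem8:
  shows "\<exists>C::real. \<forall>(n::nat) (\<theta>::real) (m::real) f.
           is_LTF n \<theta> m f \<and> \<theta> \<ge> 2 * m \<and> m > 0 \<longrightarrow>
           real (R_lin n (1/3) f) \<le> C * (\<theta> / m) * ln (\<theta> / m)"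
proof (intro exI[of _ 400] allI impI)
  fix n :: nat and \<theta> m :: real and f
  assume "is_LTF n \<theta> m f \<and> 2 * m \<le> \<theta> \<and> 0 < m"
  then obtain w where ltf: "\<forall>i<n. 0 \<le> w i" "\<forall>x\<in>cube n. m \<le> \<bar>ltf_form n w \<theta> x\<bar>"
      "\<forall>x\<in>cube n. f x = sgn01 (ltf_form n w \<theta> x)"
    and \<theta>m: "2 * m \<le> \<theta>" "0 < m"
    unfolding is_LTF_def by blast
  have "1 \<le> \<theta> / (2 * m)" using \<theta>m by simp
  then have "1 \<le> nat \<lceil>\<theta> / (2 * m)\<rceil>" by linarith
  then obtain e where e: "nat \<lceil>\<theta> / (2 * m)\<rceil> \<le> 2 ^ e" "2 ^ e < 2 * nat \<lceil>\<theta> / (2 * m)\<rceil>"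
    using exists_pow2_between by blast
  interpret ltf_sketch n \<theta> m w e
    using ltf \<theta>m e(1) by unfold_locales (auto simp: ltf_form_eq_weight)
  have "R_lin n (1/3) f \<le> r + nbins * c"
    unfolding R_lin_def by (rule Least_le) (rule sketchable_ltf[OF ltf(3)])
  then have "real (R_lin n (1/3) f) \<le> real (K * (24 * e + 105))"
    unfolding sketch_length by (simp only: of_nat_le_iff)
  also have "\<dots> \<le> 400 * (\<theta> / m) * ln (\<theta> / m)"
    using sketch_size_le[OF _ K_le e(2)[folded K_def]] \<theta>m by (simp add: field_simps)
  finally show "real (R_lin n (1/3) f) \<le> 400 * (\<theta> / m) * ln (\<theta> / m)" .
qed

end
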